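(* For every $\delta\in(0,1]$ there is $c>0$ such that every eigenvalue $\lambda$ of the matrix $a(u)^{-1}m(u)$ satisfies $\lambda\ge c$, for all $u\in\mathbb{R}^3$ with $|u|\le1-\delta$.
   Context: $\rho\in C_0^\infty(\mathbb{R}^3)$ radial with $\mathsf e=\int\rho\neq0$, $\hat\rho(k)=(2\pi)^{-3/2}\int\rho e^{-ik\cdot x}$. For $|u|<1$: $\gamma=(1-|u|^2)^{-1/2}$, $m_0(u)w=\gamma w+\gamma^3(u\cdot w)u$, $m_e=\frac13\int|\hat\rho(k)|^2|k|^{-2}dk$, $\varphi(s)=\frac{1}{2s^2(1-s^2)}-\frac{1}{4s^3}\log\frac{1+s}{1-s}$, $m_f(u)w=3m_e(\varphi(|u|)w+|u|^{-1}\varphi'(|u|)(u\cdot w)u)$, $m=m_0+m_f$, $a(u)w=\frac{\mathsf e^2}{12\pi}[\gamma^4w+4\gamma^6(u\cdot w)u]$. *)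

theory Defs
  imports "HOL-Analysis.Analysis"
begin

text \<open>Infinitely differentiable real functions on R^3: there is a family of functions
containing f that is closed under taking (everywhere existing) partial derivatives.\<close>
definition smooth3 :: "(real^3 \<Rightarrow> real) \<Rightarrow> bool" where
  "smooth3 f \<longleftrightarrow> (\<exists>F. f \<in> F \<and>
     (\<forall>g\<in>F. (\<forall>x. g differentiable (at x)) \<and>
              (\<forall>i. (\<lambda>x. frechet_derivative g (at x) (axis i 1)) \<in> F)))"

definition compact_support3 :: "(real^3 \<Rightarrow> real) \<Rightarrow> bool" where
  "compact_support3 f \<longleftrightarrow> compact (closure {x. f x \<noteq> 0})"

definition radial3 :: "(real^3 \<Rightarrow> real) \<Rightarrow> bool" where
  "radial3 f \<longleftrightarrow> (\<forall>x y. norm x = norm y \<longrightarrow> f x = f y)"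

definition charge :: "(real^3 \<Rightarrow> real) \<Rightarrow> real" where
  "charge \<rho> = (\<integral>x. \<rho> x \<partial>lborel)"

definition rho_hat :: "(real^3 \<Rightarrow> real) \<Rightarrow> real^3 \<Rightarrow> complex" where
  "rho_hat \<rho> k = complex_of_real ((2*pi) powr (-3/2)) *
      (\<integral>x. complex_of_real (\<rho> x) * cis (- (k \<bullet> x)) \<partial>lborel)"

definition m_e :: "(real^3 \<Rightarrow> real) \<Rightarrow> real" where
  "m_e \<rho> = (1/3) * (\<integral>k. (cmod (rho_hat \<rho> k))\<^sup>2 / (norm k)\<^sup>2 \<partial>lborel)"

definition gam :: "real^3 \<Rightarrow> real" where
  "gam u = 1 / sqrt (1 - (norm u)\<^sup>2)"

text \<open>phi, extended continuously by its limit 1/3 at s = 0.\<close>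
definition phi :: "real \<Rightarrow> real" where
  "phi s = (if s = 0 then 1/3 else
      1 / (2 * s\<^sup>2 * (1 - s\<^sup>2)) - 1 / (4 * s^3) * ln ((1 + s) / (1 - s)))"

definition m0 :: "real^3 \<Rightarrow> real^3^3" where
  "m0 u = (\<chi> i j. gam u * (if i = j then 1 else 0) + (gam u)^3 * (u$i) * (u$j))"

text \<open>m_f(u) w = 3 m_e (phi(|u|) w + |u|^(-1) phi'(|u|) (u.w) u);
  at u = 0 the second term vanishes (inverse 0 = 0; it is also its continuous limit).\<close>
definition mf :: "(real^3 \<Rightarrow> real) \<Rightarrow> real^3 \<Rightarrow> real^3^3" where
  "mf \<rho> u = (\<chi> i j. 3 * m_e \<rho> * (phi (norm u) * (if i = j then 1 else 0)
        + inverse (norm u) * deriv phi (norm u) * (u$i) * (u$j)))"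

definition mm :: "(real^3 \<Rightarrow> real) \<Rightarrow> real^3 \<Rightarrow> real^3^3" where
  "mm \<rho> u = m0 u + mf \<rho> u"

definition aa :: "(real^3 \<Rightarrow> real) \<Rightarrow> real^3 \<Rightarrow> real^3^3" where
  "aa \<rho> u = (\<chi> i j. (charge \<rho>)\<^sup>2 / (12 * pi) *
       ((gam u)^4 * (if i = j then 1 else 0) + 4 * (gam u)^6 * (u$i) * (u$j)))"

definition cmat :: "real^3^3 \<Rightarrow> complex^3^3" where
  "cmat A = (\<chi> i j. complex_of_real (A$i$j))"

definition is_eigenvalue3 :: "real^3^3 \<Rightarrow> complex \<Rightarrow> bool" where
  "is_eigenvalue3 A l \<longleftrightarrow> (\<exists>v::complex^3. v \<noteq> 0 \<and> cmat A *v v = l *s v)"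

end

theory Submission
  imports Defs
begin

text \<open>Both \<open>a(u)\<close> and \<open>m(u)\<close> have the form \<open>p I + q u u\<^sup>T\<close>, so every eigenvector of
  \<open>a(u)\<^sup>-\<^sup>1 m(u)\<close> is either orthogonal to \<open>u\<close> or parallel to it, and the two possible
  eigenvalues are explicit real numbers. The bounds \<open>s \<le> artanh s \<le> s/(1 - s\<^sup>2)\<close> give
  \<open>\<phi> \<ge> 0\<close> and \<open>\<phi> + s \<phi>' \<ge> 0\<close>, so together with \<open>m\<^sub>e \<ge> 0\<close> the field mass only increases
  the eigenvalues, and the kinetic part alone yields \<open>\<lambda> \<ge> 3\<pi> / (e\<^sup>2 \<gamma>\<^sup>3)\<close>, which is
  uniformly positive for \<open>|u| \<le> 1 - \<delta>\<close>.\<close>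

lemma one_minus_square_pos:
  fixes s :: real assumes "0 \<le> s" "s < 1" shows "0 < 1 - s^2"
  using assms by (simp add: abs_square_less_1)

lemma artanh_ge_self:
  fixes s :: real assumes "0 \<le> s" "s < 1" shows "s \<le> artanh s"
proof -
  have "artanh 0 - 0 \<le> artanh s - s"
  proof (rule deriv_nonneg_imp_mono[where g = "\<lambda>x. artanh x - x"
        and g' = "\<lambda>x. 1 / (1 - x^2) - 1"])
    fix x :: real assume "x \<in> {0..s}"
    then have x: "0 \<le> x" "x < 1" using assms by auto
    then show "0 \<le> 1 / (1 - x^2) - 1"
      using one_minus_square_pos[OF x] by (simp add: field_simps)
    show "((\<lambda>x. artanh x - x) has_real_derivative 1 / (1 - x^2) - 1) (at x)"
      using x by (auto intro!: derivative_eq_intros)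
  qed (use assms in auto)
  then show ?thesis by simp
qed

lemma artanh_le_div_one_minus_square:
  fixes s :: real assumes "0 \<le> s" "s < 1" shows "artanh s \<le> s / (1 - s^2)"
proof -
  have "0 / (1 - 0^2) - artanh 0 \<le> s / (1 - s^2) - artanh s"
  proof (rule deriv_nonneg_imp_mono[where g = "\<lambda>x. x / (1 - x^2) - artanh x"
        and g' = "\<lambda>x. 2 * x^2 / (1 - x^2)^2"])
    fix x :: real assume "x \<in> {0..s}"
    then have x: "0 \<le> x" "x < 1" using assms by auto
    have d: "1 - x^2 \<noteq> 0" using one_minus_square_pos[OF x] by simp
    have "((\<lambda>x. x / (1 - x^2) - artanh x) has_real_derivative
        (1 * (1 - x^2) - x * (- (2 * x))) / (1 - x^2)^2 - 1 / (1 - x^2)) (at x)"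
      using x d by (auto intro!: derivative_eq_intros simp: power2_eq_square)
    moreover have "(1 * (1 - x^2) - x * (- (2 * x))) / (1 - x^2)^2 - 1 / (1 - x^2)
        = 2 * x^2 / (1 - x^2)^2"
      using d by (simp add: divide_simps) algebra
    ultimately show "((\<lambda>x. x / (1 - x^2) - artanh x)
        has_real_derivative 2 * x^2 / (1 - x^2)^2) (at x)"
      by simp
  qed (use assms in auto)
  then show ?thesis by simp
qed

lemma phi_eq_artanh:
  fixes s :: real assumes "0 < s" "s < 1"
  shows "phi s = 1 / (2 * s^2 * (1 - s^2)) - artanh s / (2 * s^3)"
  using assms by (simp add: phi_def artanh_def)

lemma phi_nonneg:
  fixes s :: real assumes "0 \<le> s" "s < 1" shows "0 \<le> phi s"
proof (cases "s = 0")
  case False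
  with assms one_minus_square_pos have s: "0 < s" "0 < 1 - s^2" by auto
  have "phi s = (s - artanh s * (1 - s^2)) / (2 * s^3 * (1 - s^2))"
    using s assms by (simp add: phi_eq_artanh field_simps power2_eq_square power3_eq_cube)
  moreover have "artanh s * (1 - s^2) \<le> s"
    using artanh_le_div_one_minus_square[OF assms] s by (simp add: pos_le_divide_eq)
  ultimately show ?thesis using s by simp
qed (simp add: phi_def)

lemma phi_plus_deriv_eq:
  fixes s :: real assumes "0 < s" "s < 1"
  shows "phi s + s * deriv phi s
    = (artanh s * (1 - s^2)^2 - s * (1 - 2 * s^2)) / (s^3 * (1 - s^2)^2)"
proof -
  have d: "1 - s^2 \<noteq> 0" using one_minus_square_pos[of s] assms by simp
  define D where "D = - (2 * (2 * s * (1 - s^2) + s^2 * (- (2 * s)))) / (2 * s^2 * (1 - s^2))^2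
      - ((1 / (1 - s^2)) * (2 * s^3) - artanh s * (2 * (3 * s^2))) / (2 * s^3)^2"
  have "((\<lambda>x. 1 / (2 * x^2 * (1 - x^2)) - artanh x / (2 * x^3)) has_real_derivative D) (at s)"
    unfolding D_def using assms d
    by (auto intro!: derivative_eq_intros simp: abs_less_iff)
       (simp add: field_simps power2_eq_square power3_eq_cube)
  then have "(phi has_real_derivative D) (at s)"
    by (rule has_field_derivative_transform_within_open[where S = "{0<..<1}"])
       (use assms in \<open>auto simp: phi_eq_artanh\<close>)
  then have "deriv phi s = D" by (rule DERIV_imp_deriv)
  then show ?thesis
    using assms d unfolding phi_eq_artanh[OF assms] D_def by (simp add: divide_simps) algebra
qed

lemma phi_plus_deriv_nonneg:
  fixes s :: real assumes "0 \<le> s" "s < 1" shows "0 \<le> phi s + s * deriv phi s"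
proof (cases "s = 0")
  case False
  with assms have s: "0 < s" "0 < 1 - s^2" using one_minus_square_pos by auto
  have "s * (1 - 2 * s^2) \<le> s * (1 - s^2)^2"
    using s by (intro mult_left_mono) (auto simp: power2_eq_square algebra_simps)
  also have "\<dots> \<le> artanh s * (1 - s^2)^2"
    using artanh_ge_self[OF assms] by (simp add: mult_right_mono)
  finally show ?thesis
    unfolding phi_plus_deriv_eq[OF s(1) assms(2)] using s by simp
qed (simp add: phi_def)

definition scaled_id_plus_outer :: "'a::comm_ring_1 \<Rightarrow> 'a \<Rightarrow> 'a^'n \<Rightarrow> 'a^'n^'n" where
  "scaled_id_plus_outer p q u = (\<chi> i j. p * (if i = j then 1 else 0) + q * u$i * u$j)"

lemma scaled_id_plus_outer_mult_vec:
  "(scaled_id_plus_outer p q u *v x) $ i = p * x$i + q * u$i * (\<Sum>j\<in>UNIV. u$j * x$j)"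
proof -
  have "(scaled_id_plus_outer p q u *v x) $ i
      = (\<Sum>j\<in>UNIV. (if i = j then p * x$j else 0) + q * u$i * (u$j * x$j))"
    unfolding scaled_id_plus_outer_def matrix_vector_mult_def
    by (auto intro!: sum.cong simp: algebra_simps)
  then show ?thesis by (simp add: sum.distrib sum_distrib_left)
qed

lemma scaled_id_plus_outer_kernel:
  fixes a b :: "'a::field"
  assumes "scaled_id_plus_outer a b u *v x = 0" "x \<noteq> 0"
  shows "a = 0 \<or> a + b * (\<Sum>j\<in>UNIV. u$j * u$j) = 0"
proof -
  define t where "t = (\<Sum>j\<in>UNIV. u$j * x$j)"
  have x_comp: "a * x$i + b * u$i * t = 0" for i
    using arg_cong[OF assms(1), of "\<lambda>y. y $ i"] by (simp add: scaled_id_plus_outer_mult_vec t_def)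
  have "(a + b * (\<Sum>j\<in>UNIV. u$j * u$j)) * t = (\<Sum>i\<in>UNIV. u$i * (a * x$i + b * u$i * t))"
    by (simp add: t_def sum.distrib sum_distrib_left sum_distrib_right algebra_simps)
  then have "(a + b * (\<Sum>j\<in>UNIV. u$j * u$j)) * t = 0"
    by (simp add: x_comp)
  moreover have "a = 0" if "t = 0"
  proof -
    obtain i where "x$i \<noteq> 0" using assms(2) by (metis vec_eq_iff zero_index)
    then show ?thesis using x_comp[of i] that by simp
  qed
  ultimately show ?thesis by auto
qed

lemma scaled_id_plus_outer_pencil:
  "scaled_id_plus_outer m n u *v v - l *s (scaled_id_plus_outer p q u *v v)
     = scaled_id_plus_outer (m - l * p) (n - l * q) u *v v"
  by (simp add: vec_eq_iff scaled_id_plus_outer_mult_vec algebra_simps)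

lemma sum_square_components_eq_norm: "(\<Sum>j\<in>UNIV. u$j * u$j) = (norm (u :: real^'n))^2"
  by (simp add: dot_square_norm[symmetric] inner_vec_def)

lemma invertible_scaled_id_plus_outer:
  fixes p q :: real
  assumes "p \<noteq> 0" "p + q * (norm u)^2 \<noteq> 0"
  shows "invertible (scaled_id_plus_outer p q u)"
  unfolding invertible_left_inverse matrix_left_invertible_ker
  using scaled_id_plus_outer_kernel assms by (metis sum_square_components_eq_norm)

lemma matrix_mul_matrix_inv:
  assumes "invertible A" shows "A ** matrix_inv A = mat 1"
proof -
  have "\<exists>A'. A ** A' = mat 1 \<and> A' ** A = mat 1" using assms by (simp add: invertible_def)
  then show ?thesis unfolding matrix_inv_def by (rule someI2_ex) simp
qed

lemma cmat_mult: "cmat (A ** B) = cmat A ** cmat B"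
  by (simp add: cmat_def matrix_matrix_mult_def vec_eq_iff)

lemma cmat_mat_1: "cmat (mat 1) = mat 1"
  by (simp add: cmat_def mat_def vec_eq_iff)

lemma cmat_scaled_id_plus_outer:
  "cmat (scaled_id_plus_outer p q u)
     = scaled_id_plus_outer (of_real p) (of_real q) (\<chi> i. complex_of_real (u$i))"
  by (simp add: cmat_def scaled_id_plus_outer_def vec_eq_iff)

lemma is_eigenvalue3_matrix_inv_mult:
  assumes "invertible A" "is_eigenvalue3 (matrix_inv A ** M) l"
  obtains v where "v \<noteq> 0" "cmat M *v v = l *s (cmat A *v v)"
proof -
  obtain v where v: "v \<noteq> 0" "cmat (matrix_inv A ** M) *v v = l *s v"
    using assms(2) unfolding is_eigenvalue3_def by blast
  have "cmat A ** cmat (matrix_inv A) = mat 1"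
    using matrix_mul_matrix_inv[OF assms(1)] by (metis cmat_mult cmat_mat_1)
  then have "cmat M *v v = cmat A *v (cmat (matrix_inv A ** M) *v v)"
    by (simp add: cmat_mult matrix_vector_mul_assoc matrix_mul_assoc)
  then show ?thesis using v that by (simp add: vector_scalar_commute)
qed

lemma is_eigenvalue3_scaled_id_plus_outer:
  fixes p q m n :: real
  assumes "p \<noteq> 0" "p + q * (norm u)^2 \<noteq> 0"
    and "is_eigenvalue3 (matrix_inv (scaled_id_plus_outer p q u) ** scaled_id_plus_outer m n u) l"
  shows "l = of_real (m / p) \<or> l = of_real ((m + n * (norm u)^2) / (p + q * (norm u)^2))"
proof -
  obtain v where v: "v \<noteq> 0"
    "cmat (scaled_id_plus_outer m n u) *v v = l *s (cmat (scaled_id_plus_outer p q u) *v v)"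
    using is_eigenvalue3_matrix_inv_mult invertible_scaled_id_plus_outer assms by metis
  define S where "S = (norm u)^2"
  define uc where "uc = (\<chi> i. complex_of_real (u$i))"
  have S: "(\<Sum>j\<in>UNIV. uc$j * uc$j) = of_real S"
    unfolding S_def uc_def sum_square_components_eq_norm[symmetric] by simp
  have "scaled_id_plus_outer (of_real m - l * of_real p) (of_real n - l * of_real q) uc *v v = 0"
    using v(2) unfolding cmat_scaled_id_plus_outer scaled_id_plus_outer_pencil[symmetric] uc_def
    by simp
  then have "of_real m - l * of_real p = 0
      \<or> (of_real m - l * of_real p) + (of_real n - l * of_real q) * of_real S = 0"
    using scaled_id_plus_outer_kernel v(1) S by metis
  moreover have "complex_of_real (p + q * S) \<noteq> 0"
    using assms(2) unfolding S_def of_real_eq_0_iff .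
  ultimately show ?thesis
    using assms(1) unfolding S_def[symmetric] by (auto simp: field_simps)
qed

lemma m_e_nonneg: "0 \<le> m_e \<rho>"
  unfolding m_e_def by (intro mult_nonneg_nonneg integral_nonneg_AE AE_I2) auto

lemma gam_squared:
  assumes "norm u < 1" shows "(gam u)^2 * (1 - (norm u)^2) = 1"
  using one_minus_square_pos[of "norm u"] assms by (simp add: gam_def power_divide)

lemma one_le_gam:
  assumes "norm u < 1" shows "1 \<le> gam u"
  using one_minus_square_pos[of "norm u"] assms by (simp add: gam_def)

lemma gam_le:
  assumes "norm u \<le> r" "r < 1" shows "gam u \<le> 1 / sqrt (1 - r^2)"
proof -
  have "0 \<le> r" using assms(1) norm_ge_zero[of u] by linarith
  then have "0 < 1 - r^2" using one_minus_square_pos assms(2) by blast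
  moreover have "(norm u)^2 \<le> r^2" using assms by (simp add: power_mono)
  ultimately show ?thesis
    unfolding gam_def by (intro divide_left_mono mult_pos_pos) auto
qed

lemma mm_eq_scaled_id_plus_outer:
  "mm \<rho> u = scaled_id_plus_outer (gam u + 3 * m_e \<rho> * phi (norm u))
      ((gam u)^3 + 3 * m_e \<rho> * inverse (norm u) * deriv phi (norm u)) u"
  unfolding mm_def m0_def mf_def scaled_id_plus_outer_def by (simp add: vec_eq_iff algebra_simps)

lemma aa_eq_scaled_id_plus_outer:
  "aa \<rho> u = scaled_id_plus_outer ((charge \<rho>)^2 / (12 * pi) * (gam u)^4)
      (4 * ((charge \<rho>)^2 / (12 * pi)) * (gam u)^6) u"
  unfolding aa_def scaled_id_plus_outer_def by (simp add: vec_eq_iff algebra_simps)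

lemma aa_inv_mm_eigenvalue_cases:
  assumes "charge \<rho> \<noteq> 0" "norm u < 1"
    and "is_eigenvalue3 (matrix_inv (aa \<rho> u) ** mm \<rho> u) l"
  defines "K \<equiv> (charge \<rho>)^2 / (12 * pi)"
  shows "l = of_real ((gam u + 3 * m_e \<rho> * phi (norm u)) / (K * (gam u)^4))
    \<or> l = of_real (((gam u)^3 + 3 * m_e \<rho> * (phi (norm u) + norm u * deriv phi (norm u)))
                     / (K * (gam u)^4 * (4 * (gam u)^2 - 3)))"
proof -
  define g where "g = gam u"
  define s where "s = norm u"
  define me where "me = m_e \<rho>"
  define \<mu> where "\<mu> = g + 3 * me * phi s"
  define \<nu> where "\<nu> = g^3 + 3 * me * inverse s * deriv phi s"
  have K: "0 < K" using assms(1) by (simp add: K_def)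
  have g: "1 \<le> g" "g^2 * (1 - s^2) = 1"
    using one_le_gam gam_squared assms(2) by (auto simp: g_def s_def)
  have p: "0 < K * g^4" using K g by simp
  have "3 < 4 * g^2" using one_le_power[OF g(1), of 2] by linarith
  then have pq: "0 < K * g^4 * (4 * g^2 - 3)" using p by simp
  have pq_eq: "K * g^4 + 4 * K * g^6 * s^2 = K * g^4 * (4 * g^2 - 3)"
    using g(2) by algebra
  have mm: "mm \<rho> u = scaled_id_plus_outer \<mu> \<nu> u"
    by (simp add: mm_eq_scaled_id_plus_outer \<mu>_def \<nu>_def g_def s_def me_def)
  have aa: "aa \<rho> u = scaled_id_plus_outer (K * g^4) (4 * K * g^6) u"
    by (simp add: aa_eq_scaled_id_plus_outer K_def g_def)
  have eig: "l = of_real (\<mu> / (K * g^4))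
      \<or> l = of_real ((\<mu> + \<nu> * s^2) / (K * g^4 + 4 * K * g^6 * s^2))"
    unfolding s_def
  proof (rule is_eigenvalue3_scaled_id_plus_outer)
    show "K * g^4 \<noteq> 0" using p by linarith
    show "K * g^4 + 4 * K * g^6 * (norm u)^2 \<noteq> 0" using pq pq_eq unfolding s_def by linarith
    show "is_eigenvalue3 (matrix_inv (scaled_id_plus_outer (K * g^4) (4 * K * g^6) u)
        ** scaled_id_plus_outer \<mu> \<nu> u) l"
      using assms(3) by (simp only: mm aa)
  qed
  have num: "\<mu> + \<nu> * s^2 = g^3 + 3 * me * (phi s + s * deriv phi s)"
  proof -
    have "inverse s * s^2 = s" by (cases "s = 0") (simp_all add: power2_eq_square)
    moreover have "\<nu> * s^2 = g^3 * s^2 + 3 * me * deriv phi s * (inverse s * s^2)"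
      by (simp add: \<nu>_def algebra_simps)
    moreover have "g^3 * s^2 = g^3 - g" using g(2) by algebra
    ultimately show ?thesis by (simp add: \<mu>_def algebra_simps)
  qed
  show ?thesis
    using eig unfolding g_def[symmetric] s_def[symmetric] me_def[symmetric] \<mu>_def[symmetric]
      num[symmetric] pq_eq[symmetric] .
qed

lemma aa_inv_mm_eigenvalue_ge:
  assumes "charge \<rho> \<noteq> 0" "norm u < 1"
    and "is_eigenvalue3 (matrix_inv (aa \<rho> u) ** mm \<rho> u) l"
  shows "Im l = 0 \<and> 3 * pi / ((charge \<rho>)^2 * (gam u)^3) \<le> Re l"
proof -
  define K where "K = (charge \<rho>)^2 / (12 * pi)"
  define g where "g = gam u"
  define s where "s = norm u"
  define me where "me = m_e \<rho>"
  have K: "0 < K" using assms(1) by (simp add: K_def)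
  have g: "1 \<le> g" using one_le_gam assms(2) by (simp add: g_def)
  have g2: "3 < 4 * g^2" using one_le_power[OF g, of 2] by linarith
  have s: "0 \<le> s" "s < 1" using assms(2) by (auto simp: s_def)
  have me: "0 \<le> me" using m_e_nonneg by (simp add: me_def)
  have c: "3 * pi / ((charge \<rho>)^2 * g^3) = 1 / (4 * K * g^3)"
    by (simp add: K_def field_simps)
  have "1 / (4 * K * g^3) \<le> (g + 3 * me * phi s) / (K * g^4)"
  proof -
    have "1 / (4 * K * g^3) \<le> g / (K * g^4)"
      using K g by (simp add: field_simps power_eq_if)
    also have "\<dots> \<le> (g + 3 * me * phi s) / (K * g^4)"
      using K g me phi_nonneg[OF s] by (intro divide_right_mono) auto
    finally show ?thesis .
  qed
  moreover have "1 / (4 * K * g^3)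
      \<le> (g^3 + 3 * me * (phi s + s * deriv phi s)) / (K * g^4 * (4 * g^2 - 3))"
  proof -
    have "1 / (4 * K * g^3) = g^3 / (K * g^4 * (4 * g^2))"
      using K g by (simp add: field_simps power_eq_if)
    also have "\<dots> \<le> g^3 / (K * g^4 * (4 * g^2 - 3))"
      using K g g2 by (intro divide_left_mono mult_left_mono mult_pos_pos) auto
    also have "\<dots> \<le> (g^3 + 3 * me * (phi s + s * deriv phi s)) / (K * g^4 * (4 * g^2 - 3))"
      using K g g2 me phi_plus_deriv_nonneg[OF s] by (intro divide_right_mono) auto
    finally show ?thesis .
  qed
  ultimately show ?thesis
    using aa_inv_mm_eigenvalue_cases[OF assms] unfolding c
    by (auto simp: K_def g_def s_def me_def)
qed

theorem lemma4p1:
  fixes \<rho> :: "real^3 \<Rightarrow> real" and \<delta> :: real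
  assumes "smooth3 \<rho>" and "compact_support3 \<rho>" and "radial3 \<rho>"
    and "charge \<rho> \<noteq> 0"
    and "0 < \<delta>" and "\<delta> \<le> 1"
  shows "\<exists>c>0. \<forall>u::real^3. norm u \<le> 1 - \<delta> \<longrightarrow>
           (\<forall>l. is_eigenvalue3 (matrix_inv (aa \<rho> u) ** mm \<rho> u) l \<longrightarrow>
                 Im l = 0 \<and> c \<le> Re l)"
proof -
  define G where "G = 1 / sqrt (1 - (1 - \<delta>)^2)"
  define c where "c = 3 * pi / ((charge \<rho>)^2 * G^3)"
  have "0 < 1 - (1 - \<delta>)^2" using one_minus_square_pos assms(5,6) by simp
  then have "0 < c" using assms(4) by (simp add: G_def c_def)
  moreover have "Im l = 0 \<and> c \<le> Re l"
    if u: "norm u \<le> 1 - \<delta>" and l: "is_eigenvalue3 (matrix_inv (aa \<rho> u) ** mm \<rho> u) l" for u l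
  proof -
    have "norm u < 1" using u assms(5) by linarith
    have "gam u \<le> G" using gam_le[OF u] assms(5) by (simp add: G_def)
    then have "c \<le> 3 * pi / ((charge \<rho>)^2 * (gam u)^3)"
      unfolding c_def using assms(4) one_le_gam[OF \<open>norm u < 1\<close>]
      by (intro divide_left_mono mult_left_mono power_mono mult_pos_pos) auto
    then show ?thesis
      using aa_inv_mm_eigenvalue_ge[OF assms(4) \<open>norm u < 1\<close> l] by linarith
  qed
  ultimately show ?thesis by blast
qed

end
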